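(* Let $r\ge1$ be an integer, $A_N\subset\mathbb{R}$ a finite set, $p_0,q_0$ probability distributions on $(A_N)^r$, and $\epsilon\ge0$, $\alpha\ge0$, $\Delta\ge0$. Then $$\overline{\delta}(\epsilon,\alpha,\Delta)\le\Big\{\overline{d}^{\,2}-(\overline{d}^{\,2}-\Delta^2)\exp\Big(-\frac{\overline{H}(p|p_0)+\alpha\overline{H}(q|q_0)}{\epsilon}\Big)\Big\}^{1/2},$$ where for $\epsilon=0$ the exponential is read as its limit as $\epsilon\downarrow0$.
   Context: $\mathcal{D}(p_0)$ is the set of probability distributions $p$ on pairs $(\vec u,\vec u^0)\in(A_N)^r\times(A_N)^r$ with $\sum_{\vec u}p(\vec u,\vec u^0)=p_0(\vec u^0)$; $\mathcal{D}(q_0)$ likewise for pairs $(\vec v,\vec v^0)$. Under $\mathbb{E}_{p,q}$, $(\vec u,\vec u^0)\sim p$ and $(\vec v,\vec v^0)\sim q$ are independent; $d(p,q)=\{\mathbb{E}_{p,q}|\vec u\cdot\vec v-\vec u^0\cdot\vec v^0|^2\}^{1/2}$; $\phi_\Delta(p,q)=H(p)-H(p_0)+\alpha[H(q)-H(q_0)]+\epsilon\,\mathbb{E}_{p_0,q_0}\log\mathbb{P}_{p,q}\{|\vec u\cdot\vec v-\vec u^0\cdot\vec v^0|\le\Delta\mid\vec u^0,\vec v^0\}$, where $H$ is Shannon entropy (natural log), $(\vec u^0,\vec v^0)\sim p_0\times q_0$ in the outer expectation, and $\vec u\sim p(\cdot|\vec u^0)$, $\vec v\sim q(\cdot|\vec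 v^0)$ independently in the conditional probability. Then $\overline{\delta}(\epsilon,\alpha,\Delta)=\sup\{d(p,q):p\in\mathcal{D}(p_0),q\in\mathcal{D}(q_0),\phi_\Delta(p,q)\ge0\}$. Also $\overline{H}(p|p_0)=\max_{p\in\mathcal{D}(p_0)}H(p)-H(p_0)$, $\overline{H}(q|q_0)=\max_{q\in\mathcal{D}(q_0)}H(q)-H(q_0)$, and $\overline{d}=\max\{|\vec u\cdot\vec v-\vec u^0\cdot\vec v^0|:\vec u,\vec v,\vec u^0,\vec v^0\in(A_N)^r\}$. *)

theory Defs
  imports "HOL-Probability.Probability"
begin

type_synonym vec = "nat \<Rightarrow> real"

definition vecs :: "nat \<Rightarrow> real set \<Rightarrow> vec set" where
  "vecs r A = PiE {..<r} (\<lambda>_. A)"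

definition dotp :: "nat \<Rightarrow> vec \<Rightarrow> vec \<Rightarrow> real" where
  "dotp r u v = (\<Sum>i<r. u i * v i)"

definition entropy_pmf :: "'a pmf \<Rightarrow> real" where
  "entropy_pmf p = - (\<Sum>x\<in>set_pmf p. pmf p x * ln (pmf p x))"

definition Dset :: "nat \<Rightarrow> real set \<Rightarrow> vec pmf \<Rightarrow> (vec \<times> vec) pmf set" where
  "Dset r A p0 = {p. set_pmf p \<subseteq> vecs r A \<times> vecs r A \<and> map_pmf snd p = p0}"

definition dist_pq :: "nat \<Rightarrow> (vec \<times> vec) pmf \<Rightarrow> (vec \<times> vec) pmf \<Rightarrow> real" where
  "dist_pq r p q = sqrt (measure_pmf.expectation (pair_pmf p q)
      (\<lambda>((u, u0), (v, v0)). \<bar>dotp r u v - dotp r u0 v0\<bar>^2))"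

definition ln_ereal :: "real \<Rightarrow> ereal" where
  "ln_ereal x = (if x > 0 then ereal (ln x) else - \<infinity>)"

definition cond_prob :: "nat \<Rightarrow> real \<Rightarrow> (vec \<times> vec) pmf \<Rightarrow> (vec \<times> vec) pmf \<Rightarrow> vec \<Rightarrow> vec \<Rightarrow> real" where
  "cond_prob r \<Delta> p q u0 v0 =
     measure_pmf.prob (pair_pmf (cond_pmf p {x. snd x = u0}) (cond_pmf q {y. snd y = v0}))
       {((u, u0'), (v, v0')). \<bar>dotp r u v - dotp r u0' v0'\<bar> \<le> \<Delta>}"

text \<open>phi_Delta(p,q), valued in the extended reals (the log term may be -infinity;
  with the convention 0 * (-infinity) = 0 when epsilon = 0).\<close>
definition phi :: "nat \<Rightarrow> vec pmf \<Rightarrow> vec pmf \<Rightarrow> real \<Rightarrow> real \<Rightarrow> real \<Rightarrow>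
    (vec \<times> vec) pmf \<Rightarrow> (vec \<times> vec) pmf \<Rightarrow> ereal" where
  "phi r p0 q0 \<epsilon> \<alpha> \<Delta> p q =
     ereal (entropy_pmf p - entropy_pmf p0 + \<alpha> * (entropy_pmf q - entropy_pmf q0))
     + ereal \<epsilon> * (\<Sum>u0\<in>set_pmf p0. \<Sum>v0\<in>set_pmf q0.
          ereal (pmf p0 u0 * pmf q0 v0) * ln_ereal (cond_prob r \<Delta> p q u0 v0))"

definition delta_bar :: "nat \<Rightarrow> real set \<Rightarrow> vec pmf \<Rightarrow> vec pmf \<Rightarrow> real \<Rightarrow> real \<Rightarrow> real \<Rightarrow> real" where
  "delta_bar r A p0 q0 \<epsilon> \<alpha> \<Delta> =
     Sup {dist_pq r p q | p q. p \<in> Dset r A p0 \<and> q \<in> Dset r A q0 \<and> phi r p0 q0 \<epsilon> \<alpha> \<Delta> p q \<ge> 0}"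

definition H_bar :: "nat \<Rightarrow> real set \<Rightarrow> vec pmf \<Rightarrow> real" where
  "H_bar r A p0 = (SUP p\<in>Dset r A p0. entropy_pmf p) - entropy_pmf p0"

definition d_bar :: "nat \<Rightarrow> real set \<Rightarrow> real" where
  "d_bar r A = Max {\<bar>dotp r u v - dotp r u0 v0\<bar> | u v u0 v0.
       u \<in> vecs r A \<and> v \<in> vecs r A \<and> u0 \<in> vecs r A \<and> v0 \<in> vecs r A}"

definition exp_factor :: "real \<Rightarrow> real \<Rightarrow> real" where
  "exp_factor \<epsilon> S = (if \<epsilon> = 0 then Lim (at_right 0) (\<lambda>e. exp (- S / e)) else exp (- S / \<epsilon>))"

end

theory Submission
  imports Defs "HOL-Real_Asymp.Real_Asymp"
begin

text \<open>For admissible couplings p, q the pointwise bound x^2 \<le> d^2 - (d^2 - \<Delta>^2) [x \<le> \<Delta>]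
  for 0 \<le> x \<le> d gives d(p,q)^2 \<le> d^2 - (d^2 - \<Delta>^2) P, where P is the probability that the
  deviation |u.v - u0.v0| is at most \<Delta>. By the law of total probability P is the
  p0 \<times> q0 average of the conditional probabilities occurring in \<phi>, so by Jensen P is at
  least the exponential of the average of their logarithms. The constraint \<phi> \<ge> 0 together
  with H(p) - H(p0) \<le> H(p|p0) bounds that average below by -(H(p|p0) + \<alpha> H(q|q0)) / \<epsilon>.
  For \<epsilon> = 0 the exponential factor vanishes as soon as d > 0, since then A has two points
  and H(p|p0) \<ge> ln 2. The supremum is over a nonempty set because the diagonal couplings
  have \<phi> = 0.\<close>

lemma expectation_sq_le_of_bounded:
  fixes M :: "'a pmf" and f :: "'a \<Rightarrow> real"
  assumes "\<And>x. x \<in> set_pmf M \<Longrightarrow> 0 \<le> f x \<and> f x \<le> D"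
  shows "measure_pmf.expectation M (\<lambda>x. (f x)\<^sup>2) \<le> D\<^sup>2 - (D\<^sup>2 - \<Delta>\<^sup>2) * measure_pmf.prob M {x. f x \<le> \<Delta>}"
proof -
  let ?I = "indicator {x. f x \<le> \<Delta>} :: 'a \<Rightarrow> real"
  have bounded: "AE x in M. norm ((f x)\<^sup>2) \<le> D\<^sup>2"
    using assms by (auto simp: AE_measure_pmf_iff intro: power_mono)
  have integrable_bound: "integrable M (\<lambda>x. D\<^sup>2 - (D\<^sup>2 - \<Delta>\<^sup>2) * ?I x)"
    by (intro Bochner_Integration.integrable_diff integrable_mult_right integrable_real_indicator)
       (auto simp: measure_pmf.emeasure_eq_measure)
  have "measure_pmf.expectation M (\<lambda>x. (f x)\<^sup>2) \<le> measure_pmf.expectation M (\<lambda>x. D\<^sup>2 - (D\<^sup>2 - \<Delta>\<^sup>2) * ?I x)"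
    using assms
    by (intro integral_mono_AE measure_pmf.integrable_const_bound[OF bounded] integrable_bound)
       (auto simp: AE_measure_pmf_iff indicator_def intro: power_mono)
  also have "\<dots> = D\<^sup>2 - (D\<^sup>2 - \<Delta>\<^sup>2) * measure_pmf.prob M {x. f x \<le> \<Delta>}"
    by (subst Bochner_Integration.integral_diff)
       (auto simp: measure_pmf.emeasure_eq_measure measure_pmf.prob_space)
  finally show ?thesis .
qed

lemma expectation_pmf_eq_sum:
  assumes "finite F" "set_pmf M \<subseteq> F"
  shows "measure_pmf.expectation M (f :: _ \<Rightarrow> real) = (\<Sum>x\<in>F. pmf M x * f x)"
  using assms by (subst integral_measure_pmf_real[of F]) (auto simp: mult.commute)

lemma prob_pair_pmf_eq_sum:
  assumes "finite F" "finite G" "set_pmf M \<subseteq> F" "set_pmf N \<subseteq> G"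
  shows "measure_pmf.prob (pair_pmf M N) X = (\<Sum>a\<in>F. \<Sum>b\<in>G. pmf M a * pmf N b * indicator X (a, b))"
proof -
  have "measure_pmf.prob (pair_pmf M N) X = measure_pmf.expectation (pair_pmf M N) (indicator X)"
    by simp
  also have "\<dots> = (\<Sum>z\<in>F \<times> G. pmf (pair_pmf M N) z * indicator X z)"
    by (rule expectation_pmf_eq_sum) (use assms in auto)
  also have "\<dots> = (\<Sum>a\<in>F. \<Sum>b\<in>G. pmf M a * pmf N b * indicator X (a, b))"
    unfolding sum.cartesian_product by (intro sum.cong) (auto simp: pmf_pair)
  finally show ?thesis .
qed

lemma sum_pair_pmf:
  "(\<Sum>z\<in>set_pmf (pair_pmf M N). pmf (pair_pmf M N) z * f z)
    = (\<Sum>a\<in>set_pmf M. \<Sum>b\<in>set_pmf N. pmf M a * pmf N b * f (a, b))"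
  unfolding set_pair_pmf sum.cartesian_product by (intro sum.cong) (auto simp: pmf_pair)

lemma sum4_swap:
  "(\<Sum>x\<in>A. \<Sum>y\<in>B. \<Sum>a\<in>C. \<Sum>b\<in>D. f x y a b) = (\<Sum>a\<in>C. \<Sum>b\<in>D. \<Sum>x\<in>A. \<Sum>y\<in>B. f x y a b)"
proof -
  have "(\<Sum>x\<in>A. \<Sum>y\<in>B. \<Sum>a\<in>C. \<Sum>b\<in>D. f x y a b) = (\<Sum>x\<in>A. \<Sum>a\<in>C. \<Sum>y\<in>B. \<Sum>b\<in>D. f x y a b)"
    by (intro sum.cong refl sum.swap)
  also have "\<dots> = (\<Sum>a\<in>C. \<Sum>x\<in>A. \<Sum>b\<in>D. \<Sum>y\<in>B. f x y a b)"
    by (subst sum.swap) (intro sum.cong refl sum.swap)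
  also have "\<dots> = (\<Sum>a\<in>C. \<Sum>b\<in>D. \<Sum>x\<in>A. \<Sum>y\<in>B. f x y a b)"
    by (intro sum.cong refl sum.swap)
  finally show ?thesis .
qed

lemma pmf_cond_snd:
  assumes "map_pmf snd p = p0" "u0 \<in> set_pmf p0"
  shows "pmf p0 u0 * pmf (cond_pmf p {x. snd x = u0}) a = (if snd a = u0 then pmf p a else 0)"
proof -
  have "set_pmf p \<inter> {x. snd x = u0} \<noteq> {}" using assms by force
  moreover have "measure_pmf.prob p {x. snd x = u0} = pmf p0 u0"
    using assms(1) pmf_map[of snd p u0] by (simp add: vimage_def)
  moreover have "pmf p0 u0 > 0" using assms(2) by (simp add: pmf_positive)
  ultimately show ?thesis by (simp add: pmf_cond)
qed

lemma sum_pmf_cond_snd: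
  assumes "map_pmf snd p = p0" "finite (set_pmf p0)"
  shows "(\<Sum>u0\<in>set_pmf p0. pmf p0 u0 * pmf (cond_pmf p {x. snd x = u0}) a) = pmf p a"
proof -
  have "(\<Sum>u0\<in>set_pmf p0. pmf p0 u0 * pmf (cond_pmf p {x. snd x = u0}) a)
      = (\<Sum>u0\<in>set_pmf p0. if snd a = u0 then pmf p a else 0)"
    using assms(1) by (intro sum.cong) (auto simp: pmf_cond_snd)
  also have "\<dots> = pmf p a"
  proof (cases "snd a \<in> set_pmf p0")
    case False
    then have "pmf p a = 0" using assms(1) by (force simp: set_pmf_iff)
    then show ?thesis by (simp only:) simp
  qed (use assms(2) in \<open>simp add: sum.delta'\<close>)
  finally show ?thesis .
qed

lemma prob_pair_pmf_cond_snd_total: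
  assumes p: "map_pmf snd p = p0" "finite (set_pmf p)"
    and q: "map_pmf snd q = q0" "finite (set_pmf q)"
  shows "(\<Sum>u0\<in>set_pmf p0. \<Sum>v0\<in>set_pmf q0. pmf p0 u0 * pmf q0 v0 *
      measure_pmf.prob (pair_pmf (cond_pmf p {x. snd x = u0}) (cond_pmf q {y. snd y = v0})) X)
    = measure_pmf.prob (pair_pmf p q) X"
proof -
  let ?P = "\<lambda>u0. cond_pmf p {x. snd x = u0}" and ?Q = "\<lambda>v0. cond_pmf q {y. snd y = v0}"
  let ?I = "indicator X :: _ \<Rightarrow> real"
  have fin0: "finite (set_pmf p0)" "finite (set_pmf q0)" using p q by auto
  have "pmf p0 u0 * pmf q0 v0 * measure_pmf.prob (pair_pmf (?P u0) (?Q v0)) X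
      = (\<Sum>a\<in>set_pmf p. \<Sum>b\<in>set_pmf q. (pmf p0 u0 * pmf (?P u0) a) * (pmf q0 v0 * pmf (?Q v0) b) * ?I (a, b))"
    if "u0 \<in> set_pmf p0" "v0 \<in> set_pmf q0" for u0 v0
  proof -
    have "set_pmf p \<inter> {x. snd x = u0} \<noteq> {}" "set_pmf q \<inter> {y. snd y = v0} \<noteq> {}"
      using p q that by force+
    then have "measure_pmf.prob (pair_pmf (?P u0) (?Q v0)) X
        = (\<Sum>a\<in>set_pmf p. \<Sum>b\<in>set_pmf q. pmf (?P u0) a * pmf (?Q v0) b * ?I (a, b))"
      using p q by (intro prob_pair_pmf_eq_sum) (auto simp: set_cond_pmf)
    then show ?thesis by (simp add: sum_distrib_left mult_ac)
  qed
  then have "(\<Sum>u0\<in>set_pmf p0. \<Sum>v0\<in>set_pmf q0. pmf p0 u0 * pmf q0 v0 *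
      measure_pmf.prob (pair_pmf (?P u0) (?Q v0)) X)
    = (\<Sum>u0\<in>set_pmf p0. \<Sum>v0\<in>set_pmf q0. \<Sum>a\<in>set_pmf p. \<Sum>b\<in>set_pmf q.
        (pmf p0 u0 * pmf (?P u0) a) * (pmf q0 v0 * pmf (?Q v0) b) * ?I (a, b))"
    by (intro sum.cong) auto
  also have "\<dots> = (\<Sum>a\<in>set_pmf p. \<Sum>b\<in>set_pmf q. \<Sum>u0\<in>set_pmf p0. \<Sum>v0\<in>set_pmf q0.
        (pmf p0 u0 * pmf (?P u0) a) * (pmf q0 v0 * pmf (?Q v0) b) * ?I (a, b))"
    by (rule sum4_swap)
  also have "\<dots> = (\<Sum>a\<in>set_pmf p. \<Sum>b\<in>set_pmf q.
        (\<Sum>u0\<in>set_pmf p0. pmf p0 u0 * pmf (?P u0) a) * (\<Sum>v0\<in>set_pmf q0. pmf q0 v0 * pmf (?Q v0) b) * ?I (a, b))"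
    by (intro sum.cong refl) (simp only: sum_product, simp only: sum_distrib_right)
  also have "\<dots> = (\<Sum>a\<in>set_pmf p. \<Sum>b\<in>set_pmf q. pmf p a * pmf q b * ?I (a, b))"
    by (simp add: sum_pmf_cond_snd p(1) q(1) fin0)
  also have "\<dots> = measure_pmf.prob (pair_pmf p q) X"
    using p q by (intro prob_pair_pmf_eq_sum[symmetric]) auto
  finally show ?thesis .
qed

lemma exp_sum_pmf_ln_le:
  assumes "finite (set_pmf M)" "\<And>x. x \<in> set_pmf M \<Longrightarrow> 0 < f x"
  shows "exp (\<Sum>x\<in>set_pmf M. pmf M x * ln (f x)) \<le> (\<Sum>x\<in>set_pmf M. pmf M x * f x)"
proof -
  have "exp (\<Sum>x\<in>set_pmf M. pmf M x *\<^sub>R ln (f x)) \<le> (\<Sum>x\<in>set_pmf M. pmf M x * exp (ln (f x)))"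
    using assms(1) by (intro convex_on_sum[OF _ _ exp_convex]) (auto simp: sum_pmf_eq_1 set_pmf_not_empty)
  also have "\<dots> = (\<Sum>x\<in>set_pmf M. pmf M x * f x)"
    using assms(2) by (intro sum.cong) auto
  finally show ?thesis by simp
qed

lemma sum_ereal_MInfty:
  fixes f :: "'a \<Rightarrow> ereal"
  assumes "finite S" "a \<in> S" "f a = -\<infinity>" "\<And>x. x \<in> S \<Longrightarrow> f x \<noteq> \<infinity>"
  shows "sum f S = -\<infinity>"
proof -
  have "sum f (S - {a}) \<noteq> \<infinity>" using assms by (simp add: sum_Pinfty)
  then show ?thesis using assms by (simp add: sum.remove)
qed

lemma entropy_pmf_le_card:
  assumes "finite F" "set_pmf M \<subseteq> F"
  shows "entropy_pmf M \<le> card F"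
proof -
  have "- (x * ln x) \<le> 1" if "0 < x" for x :: real
    using ln_le_minus_one[of "1/x"] that by (simp add: ln_div field_simps)
  then have "entropy_pmf M \<le> (\<Sum>x\<in>set_pmf M. 1)"
    unfolding entropy_pmf_def sum_negf[symmetric] by (intro sum_mono) (simp add: pmf_positive)
  also have "\<dots> \<le> card F" using assms by (simp add: card_mono)
  finally show ?thesis .
qed

lemma entropy_pmf_map_inj:
  "inj_on f (set_pmf M) \<Longrightarrow> entropy_pmf (map_pmf f M) = entropy_pmf M"
  unfolding entropy_pmf_def by (simp add: sum.reindex pmf_map_inj)

lemma entropy_pmf_pair:
  assumes "finite (set_pmf M)" "finite (set_pmf N)"
  shows "entropy_pmf (pair_pmf M N) = entropy_pmf M + entropy_pmf N"
proof -
  let ?h = "\<lambda>M x. pmf M x * ln (pmf M x)"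
  have "(\<Sum>z\<in>set_pmf (pair_pmf M N). ?h (pair_pmf M N) z)
      = (\<Sum>a\<in>set_pmf M. \<Sum>b\<in>set_pmf N. ?h M a * pmf N b + pmf M a * ?h N b)"
    unfolding set_pair_pmf sum.cartesian_product
    by (intro sum.cong) (auto simp: pmf_pair ln_mult pmf_positive algebra_simps)
  also have "\<dots> = (\<Sum>a\<in>set_pmf M. ?h M a) + (\<Sum>b\<in>set_pmf N. ?h N b)"
    using assms by (simp add: sum.distrib sum_distrib_left[symmetric] sum_distrib_right[symmetric] sum_pmf_eq_1)
  finally show ?thesis unfolding entropy_pmf_def by simp
qed

lemma finite_vecs: "finite A \<Longrightarrow> finite (vecs r A)"
  unfolding vecs_def by (intro finite_PiE) auto

definition deviation :: "nat \<Rightarrow> (vec \<times> vec) \<times> (vec \<times> vec) \<Rightarrow> real" where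
  "deviation r = (\<lambda>((u, u0), (v, v0)). \<bar>dotp r u v - dotp r u0 v0\<bar>)"

lemma d_bar_eq_Max_deviation:
  "d_bar r A = Max (deviation r ` ((vecs r A \<times> vecs r A) \<times> (vecs r A \<times> vecs r A)))"
  unfolding d_bar_def deviation_def by (rule arg_cong[where f = Max]) (auto simp: image_iff; blast)

lemma deviation_le_d_bar:
  assumes "finite A" "z \<in> (vecs r A \<times> vecs r A) \<times> (vecs r A \<times> vecs r A)"
  shows "deviation r z \<le> d_bar r A"
  unfolding d_bar_eq_Max_deviation using assms finite_vecs[OF assms(1)] by (intro Max_ge) auto

lemma d_bar_nonneg: "finite A \<Longrightarrow> u \<in> vecs r A \<Longrightarrow> 0 \<le> d_bar r A"
  using deviation_le_d_bar[of A "((u, u), (u, u))" r] by (simp add: deviation_def)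

lemma two_points_if_d_bar_pos:
  assumes "u \<in> vecs r A" "d_bar r A > 0"
  shows "\<exists>a\<in>A. \<exists>b\<in>A. a \<noteq> b"
proof (rule ccontr)
  let ?V = "vecs r A"
  assume "\<not> ?thesis"
  then have "x = y" if "x \<in> ?V" "y \<in> ?V" for x y
    using that unfolding vecs_def by (intro PiE_ext[OF that[unfolded vecs_def]]) (auto simp: PiE_iff)
  then have "?V = {u}" using assms(1) by blast
  then show False using assms(2) by (simp add: d_bar_eq_Max_deviation deviation_def)
qed
lemma finite_set_pmf_if_Dset:
  "finite A \<Longrightarrow> p \<in> Dset r A p0 \<Longrightarrow> finite (set_pmf p)"
  unfolding Dset_def by (auto intro: finite_subset[OF _ finite_cartesian_product[OF finite_vecs finite_vecs]])

lemma H_bar_ge: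
  assumes "finite A" "p \<in> Dset r A p0"
  shows "entropy_pmf p - entropy_pmf p0 \<le> H_bar r A p0"
proof -
  have "bdd_above (entropy_pmf ` Dset r A p0)"
    using entropy_pmf_le_card[of "vecs r A \<times> vecs r A"] finite_vecs[OF assms(1)]
    unfolding Dset_def by (intro bdd_aboveI) auto
  then show ?thesis unfolding H_bar_def using cSUP_upper[OF assms(2)] by simp
qed

abbreviation diag_pmf :: "'a pmf \<Rightarrow> ('a \<times> 'a) pmf" where
  "diag_pmf p \<equiv> map_pmf (\<lambda>x. (x, x)) p"

lemma diag_pmf_in_Dset: "set_pmf p0 \<subseteq> vecs r A \<Longrightarrow> diag_pmf p0 \<in> Dset r A p0"
  unfolding Dset_def by (auto simp: pmf.map_comp o_def)

lemma entropy_diag_pmf: "entropy_pmf (diag_pmf p) = entropy_pmf p"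
  by (rule entropy_pmf_map_inj) (auto simp: inj_on_def)

lemma H_bar_nonneg: "finite A \<Longrightarrow> set_pmf p0 \<subseteq> vecs r A \<Longrightarrow> 0 \<le> H_bar r A p0"
  using H_bar_ge[OF _ diag_pmf_in_Dset] by (simp add: entropy_diag_pmf)

lemma ln2_le_H_bar:
  assumes "finite A" "set_pmf p0 \<subseteq> vecs r A" "r \<ge> 1" "a \<in> A" "b \<in> A" "a \<noteq> b"
  shows "ln 2 \<le> H_bar r A p0"
proof -
  define w where "w c = restrict (\<lambda>_. c) {..<r}" for c :: real
  have w: "w a \<in> vecs r A" "w b \<in> vecs r A"
    using assms unfolding w_def vecs_def by (auto simp: restrict_PiE_iff)
  have "w a 0 \<noteq> w b 0" using assms unfolding w_def by simp
  then have ne: "w a \<noteq> w b" by metis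
  define W where "W = pmf_of_set {w a, w b}"
  have sW: "set_pmf W = {w a, w b}" unfolding W_def by simp
  have "entropy_pmf W = ln 2"
    unfolding entropy_pmf_def sW using ne by (simp add: W_def ln_div)
  moreover have "finite (set_pmf p0)" using assms(2) finite_vecs[OF assms(1)] by (rule finite_subset)
  ultimately have "entropy_pmf (pair_pmf W p0) = ln 2 + entropy_pmf p0"
    by (subst entropy_pmf_pair) (auto simp: sW)
  moreover have "pair_pmf W p0 \<in> Dset r A p0"
    unfolding Dset_def using assms(2) w sW by (auto simp: map_snd_pair_pmf)
  ultimately show ?thesis using H_bar_ge[OF assms(1)] by fastforce
qed

lemma exp_factor_pos: "\<epsilon> > 0 \<Longrightarrow> exp_factor \<epsilon> S = exp (- S / \<epsilon>)"
  unfolding exp_factor_def by simp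

lemma exp_factor_0_pos: "S > 0 \<Longrightarrow> exp_factor 0 S = 0"
proof -
  assume "S > 0"
  then have "filterlim (\<lambda>e::real. - S / e) at_bot (at_right 0)" by real_asymp
  then have "((\<lambda>e. exp (- S / e)) \<longlongrightarrow> 0) (at_right 0)"
    by (rule filterlim_compose[OF exp_at_bot])
  then show ?thesis unfolding exp_factor_def by (simp add: tendsto_Lim)
qed

lemma exp_factor_nonneg:
  assumes "\<epsilon> \<ge> 0" "S \<ge> 0"
  shows "exp_factor \<epsilon> S \<ge> 0"
proof (cases "\<epsilon> = 0 \<and> S = 0")
  case False
  with assms consider "\<epsilon> > 0" | "\<epsilon> = 0" "S > 0" by fastforce
  then show ?thesis by cases (simp_all add: exp_factor_pos exp_factor_0_pos)
qed (simp add: exp_factor_def tendsto_Lim)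

lemma dist_pq_eq:
  "dist_pq r p q = sqrt (measure_pmf.expectation (pair_pmf p q) (\<lambda>z. (deviation r z)\<^sup>2))"
  unfolding dist_pq_def deviation_def by (simp add: case_prod_beta')

lemma cond_prob_eq:
  "cond_prob r \<Delta> p q u0 v0 = measure_pmf.prob
     (pair_pmf (cond_pmf p {x. snd x = u0}) (cond_pmf q {y. snd y = v0})) {z. deviation r z \<le> \<Delta>}"
  unfolding cond_prob_def deviation_def by (simp add: case_prod_beta')

lemma expectation_deviation_sq_le:
  assumes "finite A" "p \<in> Dset r A p0" "q \<in> Dset r A q0"
  shows "measure_pmf.expectation (pair_pmf p q) (\<lambda>z. (deviation r z)\<^sup>2)
    \<le> (d_bar r A)\<^sup>2 - ((d_bar r A)\<^sup>2 - \<Delta>\<^sup>2) * measure_pmf.prob (pair_pmf p q) {z. deviation r z \<le> \<Delta>}"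
proof (rule expectation_sq_le_of_bounded)
  fix z assume "z \<in> set_pmf (pair_pmf p q)"
  then have "z \<in> (vecs r A \<times> vecs r A) \<times> (vecs r A \<times> vecs r A)"
    using assms(2,3) unfolding Dset_def by auto
  then show "0 \<le> deviation r z \<and> deviation r z \<le> d_bar r A"
    using deviation_le_d_bar[OF assms(1)] by (auto simp: deviation_def split: prod.splits)
qed

lemma cond_prob_pos_if_phi_nonneg:
  assumes "finite (set_pmf p0)" "finite (set_pmf q0)" "\<epsilon> > 0" "phi r p0 q0 \<epsilon> \<alpha> \<Delta> p q \<ge> 0"
    and "u0 \<in> set_pmf p0" "v0 \<in> set_pmf q0"
  shows "cond_prob r \<Delta> p q u0 v0 > 0"
proof (rule ccontr)
  let ?L = "\<lambda>a b. ereal (pmf p0 a * pmf q0 b) * ln_ereal (cond_prob r \<Delta> p q a b)"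
  have L_finite: "?L a b \<noteq> \<infinity>" for a b
    by (simp add: ln_ereal_def not_less)
  assume "\<not> ?thesis"
  moreover have "0 \<le> cond_prob r \<Delta> p q u0 v0" unfolding cond_prob_def by simp
  ultimately have "cond_prob r \<Delta> p q u0 v0 = 0" by linarith
  then have "?L u0 v0 = -\<infinity>"
    using assms(5,6) by (simp add: ln_ereal_def set_pmf_iff)
  then have "(\<Sum>b\<in>set_pmf q0. ?L u0 b) = -\<infinity>"
    using assms(2,6) L_finite by (intro sum_ereal_MInfty)
  moreover have "(\<Sum>b\<in>set_pmf q0. ?L a b) \<noteq> \<infinity>" for a
    unfolding sum_Pinfty using L_finite by blast
  ultimately have "(\<Sum>a\<in>set_pmf p0. \<Sum>b\<in>set_pmf q0. ?L a b) = -\<infinity>"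
    by (rule sum_ereal_MInfty[OF assms(1,5)])
  then have "phi r p0 q0 \<epsilon> \<alpha> \<Delta> p q = -\<infinity>"
    unfolding phi_def using assms(3) by simp
  with assms(4) show False by simp
qed

lemma phi_eq_if_cond_prob_pos:
  assumes "\<And>u0 v0. u0 \<in> set_pmf p0 \<Longrightarrow> v0 \<in> set_pmf q0 \<Longrightarrow> cond_prob r \<Delta> p q u0 v0 > 0"
  shows "phi r p0 q0 \<epsilon> \<alpha> \<Delta> p q = ereal (entropy_pmf p - entropy_pmf p0 + \<alpha> * (entropy_pmf q - entropy_pmf q0)
    + \<epsilon> * (\<Sum>u0\<in>set_pmf p0. \<Sum>v0\<in>set_pmf q0. pmf p0 u0 * pmf q0 v0 * ln (cond_prob r \<Delta> p q u0 v0)))"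
proof -
  have "(\<Sum>u0\<in>set_pmf p0. \<Sum>v0\<in>set_pmf q0.
      ereal (pmf p0 u0 * pmf q0 v0) * ln_ereal (cond_prob r \<Delta> p q u0 v0))
    = ereal (\<Sum>u0\<in>set_pmf p0. \<Sum>v0\<in>set_pmf q0. pmf p0 u0 * pmf q0 v0 * ln (cond_prob r \<Delta> p q u0 v0))"
    unfolding sum_ereal[symmetric] using assms by (intro sum.cong) (auto simp: ln_ereal_def)
  then show ?thesis unfolding phi_def by simp
qed

lemma exp_factor_pos_le_prob_deviation_le:
  assumes "finite A" "set_pmf p0 \<subseteq> vecs r A" "set_pmf q0 \<subseteq> vecs r A"
    and p: "p \<in> Dset r A p0" and q: "q \<in> Dset r A q0"
    and "\<epsilon> > 0" "\<alpha> \<ge> 0" "phi r p0 q0 \<epsilon> \<alpha> \<Delta> p q \<ge> 0"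
  shows "exp_factor \<epsilon> (H_bar r A p0 + \<alpha> * H_bar r A q0)
    \<le> measure_pmf.prob (pair_pmf p q) {z. deviation r z \<le> \<Delta>}"
proof -
  let ?P = "cond_prob r \<Delta> p q"
  have fin: "finite (set_pmf p0)" "finite (set_pmf q0)"
    using assms(2,3) finite_vecs[OF assms(1)] by (auto intro: finite_subset)
  have pos: "?P u0 v0 > 0" if "u0 \<in> set_pmf p0" "v0 \<in> set_pmf q0" for u0 v0
    using fin assms(6,8) that by (rule cond_prob_pos_if_phi_nonneg)
  define L where "L = (\<Sum>u0\<in>set_pmf p0. \<Sum>v0\<in>set_pmf q0. pmf p0 u0 * pmf q0 v0 * ln (?P u0 v0))"
  have "entropy_pmf p - entropy_pmf p0 + \<alpha> * (entropy_pmf q - entropy_pmf q0)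
      \<le> H_bar r A p0 + \<alpha> * H_bar r A q0"
    using H_bar_ge[OF assms(1) p] H_bar_ge[OF assms(1) q] assms(7) by (intro add_mono mult_left_mono)
  moreover have "0 \<le> entropy_pmf p - entropy_pmf p0 + \<alpha> * (entropy_pmf q - entropy_pmf q0) + \<epsilon> * L"
    using assms(8) by (simp add: phi_eq_if_cond_prob_pos[OF pos] L_def)
  ultimately have "- (H_bar r A p0 + \<alpha> * H_bar r A q0) \<le> \<epsilon> * L" by linarith
  then have "exp_factor \<epsilon> (H_bar r A p0 + \<alpha> * H_bar r A q0) \<le> exp L"
    using assms(6) by (simp add: exp_factor_pos divide_le_eq mult.commute)
  also have "\<dots> \<le> (\<Sum>u0\<in>set_pmf p0. \<Sum>v0\<in>set_pmf q0. pmf p0 u0 * pmf q0 v0 * ?P u0 v0)"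
    using exp_sum_pmf_ln_le[of "pair_pmf p0 q0" "\<lambda>z. ?P (fst z) (snd z)"] fin pos
    unfolding L_def sum_pair_pmf by auto
  also have "\<dots> = measure_pmf.prob (pair_pmf p q) {z. deviation r z \<le> \<Delta>}"
    unfolding cond_prob_eq using p q finite_set_pmf_if_Dset[OF assms(1)]
    by (intro prob_pair_pmf_cond_snd_total) (auto simp: Dset_def)
  finally show ?thesis .
qed

lemma exp_factor_0_if_d_bar_pos:
  assumes "r \<ge> 1" "finite A" "set_pmf p0 \<subseteq> vecs r A" "set_pmf q0 \<subseteq> vecs r A"
    and "\<alpha> \<ge> 0" "d_bar r A > 0"
  shows "exp_factor 0 (H_bar r A p0 + \<alpha> * H_bar r A q0) = 0"
proof -
  obtain u where "u \<in> vecs r A" using assms(3) set_pmf_not_empty[of p0] by blast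
  then obtain a b where ab: "a \<in> A" "b \<in> A" "a \<noteq> b"
    using two_points_if_d_bar_pos assms(6) by blast
  have "0 < ln (2 :: real)" by simp
  also have "\<dots> \<le> H_bar r A p0" by (rule ln2_le_H_bar[OF assms(2,3,1) ab])
  finally have "0 < H_bar r A p0" .
  moreover have "0 \<le> \<alpha> * H_bar r A q0" using H_bar_nonneg[OF assms(2,4)] assms(5) by simp
  ultimately show ?thesis by (intro exp_factor_0_pos) simp
qed

lemma exp_factor_le_prob_deviation_le:
  assumes "r \<ge> 1" "finite A" "set_pmf p0 \<subseteq> vecs r A" "set_pmf q0 \<subseteq> vecs r A"
    and "\<epsilon> \<ge> 0" "\<alpha> \<ge> 0" "\<Delta> \<ge> 0" "\<Delta> < d_bar r A"
    and p: "p \<in> Dset r A p0" and q: "q \<in> Dset r A q0" and phi: "phi r p0 q0 \<epsilon> \<alpha> \<Delta> p q \<ge> 0"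
  shows "exp_factor \<epsilon> (H_bar r A p0 + \<alpha> * H_bar r A q0)
    \<le> measure_pmf.prob (pair_pmf p q) {z. deviation r z \<le> \<Delta>}"
proof (cases "\<epsilon> = 0")
  case True
  have "d_bar r A > 0" using assms(7,8) by linarith
  then have "exp_factor \<epsilon> (H_bar r A p0 + \<alpha> * H_bar r A q0) = 0"
    unfolding True by (rule exp_factor_0_if_d_bar_pos[OF assms(1-4,6)])
  then show ?thesis by simp
next
  case False
  then have "\<epsilon> > 0" using assms(5) by simp
  then show ?thesis by (rule exp_factor_pos_le_prob_deviation_le[OF assms(2-4) p q _ assms(6) phi])
qed

lemma dist_pq_le:
  assumes "r \<ge> 1" "finite A" "set_pmf p0 \<subseteq> vecs r A" "set_pmf q0 \<subseteq> vecs r A"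
    and "\<epsilon> \<ge> 0" "\<alpha> \<ge> 0" "\<Delta> \<ge> 0"
    and p: "p \<in> Dset r A p0" and q: "q \<in> Dset r A q0" and phi: "phi r p0 q0 \<epsilon> \<alpha> \<Delta> p q \<ge> 0"
  shows "dist_pq r p q \<le> sqrt ((d_bar r A)\<^sup>2 - ((d_bar r A)\<^sup>2 - \<Delta>\<^sup>2) *
      exp_factor \<epsilon> (H_bar r A p0 + \<alpha> * H_bar r A q0))"
proof -
  let ?D = "d_bar r A" and ?EF = "exp_factor \<epsilon> (H_bar r A p0 + \<alpha> * H_bar r A q0)"
  let ?E = "measure_pmf.expectation (pair_pmf p q) (\<lambda>z. (deviation r z)\<^sup>2)"
  let ?Pr = "measure_pmf.prob (pair_pmf p q) {z. deviation r z \<le> \<Delta>}"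
  have E_le: "?E \<le> ?D\<^sup>2 - (?D\<^sup>2 - \<Delta>\<^sup>2) * ?Pr"
    using assms(2) p q by (rule expectation_deviation_sq_le)
  have E_le_D: "?E \<le> ?D\<^sup>2"
    using expectation_deviation_sq_le[OF assms(2) p q, where \<Delta> = ?D] by simp
  have EF_nonneg: "0 \<le> ?EF"
    using H_bar_nonneg[OF assms(2,3)] H_bar_nonneg[OF assms(2,4)] assms(5,6)
    by (intro exp_factor_nonneg) auto
  have "?E \<le> ?D\<^sup>2 - (?D\<^sup>2 - \<Delta>\<^sup>2) * ?EF"
  proof (cases "?D \<le> \<Delta>")
    case True
    obtain u where "u \<in> vecs r A" using assms(3) set_pmf_not_empty[of p0] by blast
    with True have "?D\<^sup>2 \<le> \<Delta>\<^sup>2" using d_bar_nonneg[OF assms(2)] by (simp add: power_mono)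
    then have "(?D\<^sup>2 - \<Delta>\<^sup>2) * ?EF \<le> 0" using EF_nonneg by (intro mult_nonpos_nonneg) simp_all
    with E_le_D show ?thesis by linarith
  next
    case False
    then have "?EF \<le> ?Pr"
      by (intro exp_factor_le_prob_deviation_le[OF assms(1-7) _ p q phi]) simp
    moreover have "0 \<le> ?D\<^sup>2 - \<Delta>\<^sup>2" using False assms(7) by (simp add: power_mono)
    ultimately have "(?D\<^sup>2 - \<Delta>\<^sup>2) * ?EF \<le> (?D\<^sup>2 - \<Delta>\<^sup>2) * ?Pr" by (rule mult_left_mono)
    with E_le show ?thesis by linarith
  qed
  then show ?thesis unfolding dist_pq_eq by (rule real_sqrt_le_mono)
qed

lemma phi_diag_pmf:
  assumes "\<Delta> \<ge> 0"
  shows "phi r p0 q0 \<epsilon> \<alpha> \<Delta> (diag_pmf p0) (diag_pmf q0) = 0"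
proof -
  have "cond_prob r \<Delta> (diag_pmf p0) (diag_pmf q0) u0 v0 = 1"
    if "u0 \<in> set_pmf p0" "v0 \<in> set_pmf q0" for u0 v0
  proof -
    have "set_pmf (diag_pmf p0) \<inter> {x. snd x = u0} \<noteq> {}" "set_pmf (diag_pmf q0) \<inter> {y. snd y = v0} \<noteq> {}"
      using that by force+
    then show ?thesis
      unfolding cond_prob_def using assms
      by (subst measure_pmf.prob_eq_1) (auto simp: AE_measure_pmf_iff set_cond_pmf)
  qed
  then show ?thesis
    unfolding phi_def entropy_diag_pmf by (simp add: ln_ereal_def)
qed

theorem proposition4:
  fixes r :: nat and A :: "real set" and p0 q0 :: "vec pmf" and \<epsilon> \<alpha> \<Delta> :: real
  assumes "r \<ge> 1" and "finite A"
    and "set_pmf p0 \<subseteq> vecs r A" and "set_pmf q0 \<subseteq> vecs r A"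
    and "\<epsilon> \<ge> 0" and "\<alpha> \<ge> 0" and "\<Delta> \<ge> 0"
  shows "delta_bar r A p0 q0 \<epsilon> \<alpha> \<Delta> \<le>
    sqrt ((d_bar r A)\<^sup>2 - ((d_bar r A)\<^sup>2 - \<Delta>\<^sup>2) *
      exp_factor \<epsilon> (H_bar r A p0 + \<alpha> * H_bar r A q0))"
proof -
  let ?S = "{dist_pq r p q | p q. p \<in> Dset r A p0 \<and> q \<in> Dset r A q0 \<and> phi r p0 q0 \<epsilon> \<alpha> \<Delta> p q \<ge> 0}"
  have "phi r p0 q0 \<epsilon> \<alpha> \<Delta> (diag_pmf p0) (diag_pmf q0) \<ge> 0"
    using phi_diag_pmf[OF assms(7)] by simp
  then have "dist_pq r (diag_pmf p0) (diag_pmf q0) \<in> ?S"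
    using diag_pmf_in_Dset[OF assms(3)] diag_pmf_in_Dset[OF assms(4)] by blast
  then have "?S \<noteq> {}" by blast
  then show ?thesis
    unfolding delta_bar_def by (rule cSup_least) (use dist_pq_le[OF assms] in blast)
qed

end
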